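(* There is $c_1>0$ (depending on $d,\gamma,\chi$) such that for all $N$ large enough, $$\inf_{x\in\partial B}P_x[H_G<H_\Delta]\ge c_1N^{\gamma-1},$$ where $G=\{x\in B:\mathrm{dist}(x,\partial B)\ge\chi N/2\}$.
   Context: Let $d\ge3$, $\gamma\in(\frac1{d-1},1)$, $\chi\in(0,\frac14)$. Identify $\mathbb T_N^d$ with $\{0,\dots,N-1\}^d$. Let $L=2N^\gamma+\chi N$, $B=\bigcup_{x\in[L,N-L]^d\cap\mathbb Z^d}B(x,\chi N)$ (Euclidean balls), $\Delta=\big(\bigcup_{x\in B}B(x,N^\gamma)\big)^c$, as subsets of $\mathbb T_N^d$. $\partial K=\{x\in K:\exists y\notin K,|x-y|=1\}$; $\mathrm{dist}$ is Euclidean distance. $P_x$ is the law of simple random walk on $\mathbb T_N^d$ started at $x$, $H_K=\inf\{k\ge0:X_k\in K\}$. *)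

theory Defs
  imports "HOL-Probability.Probability"
begin

text \<open>Discrete torus T_N^d, identified with {0,...,N-1}^d; points are functions
  nat => int, with coordinates i < d in {0..N-1} and coordinates i >= d equal to 0.\<close>

definition torus :: "nat \<Rightarrow> nat \<Rightarrow> (nat \<Rightarrow> int) set" where
  "torus N d = {x. (\<forall>i<d. 0 \<le> x i \<and> x i < int N) \<and> (\<forall>i\<ge>d. x i = 0)}"

definition tdist :: "nat \<Rightarrow> nat \<Rightarrow> (nat \<Rightarrow> int) \<Rightarrow> (nat \<Rightarrow> int) \<Rightarrow> real" where
  "tdist N d x y = sqrt (\<Sum>i<d. (real_of_int (min \<bar>x i - y i\<bar> (int N - \<bar>x i - y i\<bar>)))\<^sup>2)"

definition tball :: "nat \<Rightarrow> nat \<Rightarrow> (nat \<Rightarrow> int) \<Rightarrow> real \<Rightarrow> (nat \<Rightarrow> int) set" where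
  "tball N d x r = {y \<in> torus N d. tdist N d x y \<le> r}"

definition tbdry :: "nat \<Rightarrow> nat \<Rightarrow> (nat \<Rightarrow> int) set \<Rightarrow> (nat \<Rightarrow> int) set" where
  "tbdry N d K = {x \<in> K. \<exists>y \<in> torus N d - K. tdist N d x y = 1}"

definition tsetdist :: "nat \<Rightarrow> nat \<Rightarrow> (nat \<Rightarrow> int) \<Rightarrow> (nat \<Rightarrow> int) set \<Rightarrow> real" where
  "tsetdist N d x K = Inf (tdist N d x ` K)"

definition Lval :: "real \<Rightarrow> real \<Rightarrow> nat \<Rightarrow> real" where
  "Lval \<gamma> chi N = 2 * real N powr \<gamma> + chi * real N"

definition centers :: "nat \<Rightarrow> real \<Rightarrow> real \<Rightarrow> nat \<Rightarrow> (nat \<Rightarrow> int) set" where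
  "centers d \<gamma> chi N = {x \<in> torus N d. \<forall>i<d. Lval \<gamma> chi N \<le> real_of_int (x i)
                                        \<and> real_of_int (x i) \<le> real N - Lval \<gamma> chi N}"

definition Bset :: "nat \<Rightarrow> real \<Rightarrow> real \<Rightarrow> nat \<Rightarrow> (nat \<Rightarrow> int) set" where
  "Bset d \<gamma> chi N = (\<Union>x \<in> centers d \<gamma> chi N. tball N d x (chi * real N))"

definition Delta :: "nat \<Rightarrow> real \<Rightarrow> real \<Rightarrow> nat \<Rightarrow> (nat \<Rightarrow> int) set" where
  "Delta d \<gamma> chi N = torus N d - (\<Union>x \<in> Bset d \<gamma> chi N. tball N d x (real N powr \<gamma>))"

definition Gset :: "nat \<Rightarrow> real \<Rightarrow> real \<Rightarrow> nat \<Rightarrow> (nat \<Rightarrow> int) set" where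
  "Gset d \<gamma> chi N = {x \<in> Bset d \<gamma> chi N.
      tsetdist N d x (tbdry N d (Bset d \<gamma> chi N)) \<ge> chi * real N / 2}"

definition unit_steps :: "nat \<Rightarrow> (nat \<Rightarrow> int) set" where
  "unit_steps d = {(\<lambda>j. if j = i then s else 0) | i s. i < d \<and> (s = 1 \<or> s = -1)}"

definition walk_space :: "nat \<Rightarrow> (nat \<Rightarrow> nat \<Rightarrow> int) measure" where
  "walk_space d = PiM (UNIV::nat set) (\<lambda>_. measure_pmf (pmf_of_set (unit_steps d)))"

definition walk_pos :: "nat \<Rightarrow> (nat \<Rightarrow> int) \<Rightarrow> (nat \<Rightarrow> nat \<Rightarrow> int) \<Rightarrow> nat \<Rightarrow> (nat \<Rightarrow> int)" where
  "walk_pos N x \<omega> k = (\<lambda>i. (x i + (\<Sum>j<k. \<omega> j i)) mod int N)"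

definition hit_time :: "nat \<Rightarrow> (nat \<Rightarrow> int) \<Rightarrow> (nat \<Rightarrow> nat \<Rightarrow> int) \<Rightarrow> (nat \<Rightarrow> int) set \<Rightarrow> enat" where
  "hit_time N x \<omega> K = (if \<exists>k. walk_pos N x \<omega> k \<in> K
                         then enat (LEAST k. walk_pos N x \<omega> k \<in> K) else \<infinity>)"

definition hit_before_prob :: "nat \<Rightarrow> nat \<Rightarrow> (nat \<Rightarrow> int) \<Rightarrow> (nat \<Rightarrow> int) set \<Rightarrow> (nat \<Rightarrow> int) set \<Rightarrow> real" where
  "hit_before_prob N d x G D = measure (walk_space d)
     {\<omega> \<in> space (walk_space d). hit_time N x \<omega> G < hit_time N x \<omega> D}"

end

theory Submission
  imports Defs "HOL-Real_Asymp.Real_Asymp"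
begin

(* Take a ball B(c, chi N) of B containing x and the Gaussian
   phi(y) = exp (- mu |y - c|^2) - exp (- mu R2^2),  mu = 32 d / (chi N)^2,  R2 = chi N + N^gamma / 2.
   On the annulus between the radii chi N / 4 and R2 the one-step average of phi exceeds phi by a
   fixed eps > 0, so phi(x) bounds from below the probability that the walk reaches the inner ball
   (contained in G) before leaving the outer ball. The outer ball lies in the N^gamma-neighbourhood
   of B, hence misses Delta, and |x - c| <= chi N gives phi(x) >= c1 N^gamma / N. *)

definition unit_vec :: "nat \<Rightarrow> int \<Rightarrow> nat \<Rightarrow> int" where
  "unit_vec i s = (\<lambda>j. if j = i then s else 0)"

lemma unit_steps_eq_image: "unit_steps d = (\<lambda>(i, s). unit_vec i s) ` ({..<d} \<times> {1, -1})"
  unfolding unit_steps_def unit_vec_def by auto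

lemma inj_on_unit_vec: "inj_on (\<lambda>(i, s). unit_vec i s) ({..<d} \<times> {1, -1})"
proof (rule inj_onI, clarify)
  fix i s i' s' assume eq: "unit_vec i s = unit_vec i' s'" and "s \<in> {1, -1::int}" "s' \<in> {1, -1::int}"
  then have "i = i'"
    using fun_cong[OF eq, of i] unfolding unit_vec_def by (auto split: if_splits)
  then show "i = i' \<and> s = s'"
    using fun_cong[OF eq, of i] by (simp add: unit_vec_def)
qed

lemma finite_unit_steps: "finite (unit_steps d)"
  unfolding unit_steps_eq_image by simp

lemma unit_steps_nonempty: "d > 0 \<Longrightarrow> unit_steps d \<noteq> {}"
  unfolding unit_steps_def by blast

lemma card_unit_steps: "card (unit_steps d) = 2 * d"
  unfolding unit_steps_eq_image
  by (simp add: card_image[OF inj_on_unit_vec] card_cartesian_product)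

lemma sum_unit_steps:
  "(\<Sum>e\<in>unit_steps d. h e) = (\<Sum>i<d. h (unit_vec i 1) + h (unit_vec i (-1)))"
  unfolding unit_steps_eq_image
  by (simp add: sum.reindex[OF inj_on_unit_vec] sum.cartesian_product')

lemma space_walk_space [simp]: "space (walk_space d) = UNIV"
  by (simp add: walk_space_def space_PiM)

lemma prob_space_walk_space: "prob_space (walk_space d)"
  unfolding walk_space_def by (intro prob_space_PiM prob_space_measure_pmf)

lemma measurable_countable_binop:
  fixes f g :: "_ \<Rightarrow> 'b::countable"
  assumes "f \<in> measurable M (count_space UNIV)" "g \<in> measurable M (count_space UNIV)"
  shows "(\<lambda>\<omega>. F (f \<omega>) (g \<omega>) :: 'c) \<in> measurable M (count_space UNIV)"
proof -
  have "(\<lambda>\<omega>. F a (g \<omega>)) \<in> measurable M (count_space UNIV)" for a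
    by (rule measurable_compose_countable[where f = "\<lambda>b \<omega>. F a b", OF _ assms(2)]) simp
  then show ?thesis
    by (rule measurable_compose_countable[where f = "\<lambda>a \<omega>. F a (g \<omega>)", OF _ assms(1)])
qed

lemma measurable_walk_pos_coord:
  "(\<lambda>\<omega>. walk_pos N y \<omega> k i) \<in> measurable (walk_space d) (count_space UNIV)"
proof -
  have step: "(\<lambda>\<omega>. \<omega> j i) \<in> measurable (walk_space d) (count_space UNIV)" for j
  proof -
    have "(\<lambda>\<omega>. \<omega> j) \<in> measurable (walk_space d) (count_space UNIV)"
      unfolding walk_space_def using measurable_component_singleton[of j UNIV] by simp
    then show ?thesis by (rule measurable_compose) simp
  qed
  have "(\<lambda>\<omega>. \<Sum>j<k. \<omega> j i) \<in> measurable (walk_space d) (count_space UNIV)"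
    by (induction k) (simp_all add: measurable_countable_binop[OF _ step, of _ "(+)"])
  from measurable_countable_binop[OF this, of "\<lambda>_. 0::int" "\<lambda>a _. (y i + a) mod int N"]
  show ?thesis unfolding walk_pos_def by simp
qed

lemma sets_walk_pos_in:
  assumes "finite S"
  shows "{\<omega>. walk_pos N y \<omega> k \<in> S} \<in> sets (walk_space d)"
proof -
  have "{\<omega>. walk_pos N y \<omega> k = g} = (\<Inter>i. (\<lambda>\<omega>. walk_pos N y \<omega> k i) -` {g i} \<inter> space (walk_space d))"
    for g by (auto simp: fun_eq_iff)
  then have "{\<omega>. walk_pos N y \<omega> k = g} \<in> sets (walk_space d)" for g
    using measurable_sets[OF measurable_walk_pos_coord] by (simp add: sets.countable_INT)
  moreover have "{\<omega>. walk_pos N y \<omega> k \<in> S} = (\<Union>g\<in>S. {\<omega>. walk_pos N y \<omega> k = g})" by auto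
  ultimately show ?thesis using assms by auto
qed

text \<open>Conditioning on the first step: under the product measure the step sequence is the
  first step prepended (\<open>case_nat\<close>) to an independent copy of the sequence.\<close>

lemma emeasure_walk_space_first_step:
  assumes d: "d > 0" and A: "A \<in> sets (walk_space d)"
  shows "emeasure (walk_space d) A =
    (\<Sum>e\<in>unit_steps d. emeasure (walk_space d) {\<omega>. case_nat e \<omega> \<in> A}) / card (unit_steps d)"
proof -
  define M where "M = measure_pmf (pmf_of_set (unit_steps d))"
  interpret S: sequence_space M unfolding M_def by unfold_locales
  interpret P: pair_sigma_finite M "\<Pi>\<^sub>M i::nat\<in>UNIV. M" by unfold_locales
  have W: "walk_space d = S.S" by (simp add: walk_space_def M_def)
  have meas: "(\<lambda>(s, \<omega>). case_nat s \<omega>) \<in> measurable (M \<Otimes>\<^sub>M S.S) S.S" by measurable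
  have A': "A \<in> sets S.S" using A W by simp
  have "emeasure S.S A = emeasure (distr (M \<Otimes>\<^sub>M S.S) S.S (\<lambda>(s, \<omega>). case_nat s \<omega>)) A"
    by (simp add: S.PiM_iter)
  also have "\<dots> = emeasure (M \<Otimes>\<^sub>M S.S) ((\<lambda>(s, \<omega>). case_nat s \<omega>) -` A \<inter> space (M \<Otimes>\<^sub>M S.S))"
    by (rule emeasure_distr[OF meas A'])
  also have "\<dots> = (\<integral>\<^sup>+e. emeasure S.S {\<omega>. case_nat e \<omega> \<in> A} \<partial>M)"
    by (subst S.emeasure_pair_measure_alt[OF measurable_sets[OF meas A']])
       (intro nn_integral_cong arg_cong[where f = "emeasure S.S"];
        auto simp: space_pair_measure M_def space_PiM)
  also have "\<dots> = (\<Sum>e\<in>unit_steps d. emeasure S.S {\<omega>. case_nat e \<omega> \<in> A}) / card (unit_steps d)"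
    unfolding M_def by (rule nn_integral_pmf_of_set[OF unit_steps_nonempty[OF d] finite_unit_steps])
  finally show ?thesis by (simp add: W)
qed

definition torus_step :: "nat \<Rightarrow> (nat \<Rightarrow> int) \<Rightarrow> (nat \<Rightarrow> int) \<Rightarrow> nat \<Rightarrow> int" where
  "torus_step N y e = (\<lambda>i. (y i + e i) mod int N)"

lemma walk_pos_case_nat_Suc:
  "walk_pos N y (case_nat e \<omega>) (Suc k) = walk_pos N (torus_step N y e) \<omega> k"
  unfolding walk_pos_def torus_step_def sum.lessThan_Suc_shift
  by (simp add: mod_add_left_eq add.assoc)

lemma walk_pos_0: "y \<in> torus N d \<Longrightarrow> walk_pos N y \<omega> 0 = y"
proof (intro ext)
  fix i assume "y \<in> torus N d"
  then show "walk_pos N y \<omega> 0 i = y i"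
    unfolding walk_pos_def torus_def by (cases "i < d") (auto simp: mod_pos_pos_trivial)
qed

lemma torus_step_in_torus: "y \<in> torus N d \<Longrightarrow> e \<in> unit_steps d \<Longrightarrow> torus_step N y e \<in> torus N d"
  unfolding torus_def torus_step_def unit_steps_def by auto

lemma finite_torus: "finite (torus N d)"
proof -
  have "torus N d \<subseteq> (\<lambda>f i. if i < d then f i else 0) ` (PiE {..<d} (\<lambda>_. {0..<int N}))"
  proof
    fix x assume x: "x \<in> torus N d"
    then have "x = (\<lambda>i. if i < d then restrict x {..<d} i else 0)"
      unfolding torus_def by (auto simp: fun_eq_iff)
    moreover have "restrict x {..<d} \<in> PiE {..<d} (\<lambda>_. {0..<int N})"
      using x unfolding torus_def by auto
    ultimately show "x \<in> (\<lambda>f i. if i < d then f i else 0) ` (PiE {..<d} (\<lambda>_. {0..<int N}))"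
      by blast
  qed
  then show ?thesis by (rule finite_subset) (intro finite_imageI finite_PiE; simp)
qed

definition reach_within ::
    "nat \<Rightarrow> (nat \<Rightarrow> int) set \<Rightarrow> (nat \<Rightarrow> int) set \<Rightarrow> nat \<Rightarrow> (nat \<Rightarrow> int) \<Rightarrow> (nat \<Rightarrow> nat \<Rightarrow> int) set" where
  "reach_within N G A n y = {\<omega>. \<exists>k\<le>n. walk_pos N y \<omega> k \<in> G \<and> (\<forall>j<k. walk_pos N y \<omega> j \<in> A)}"

lemma sets_reach_within:
  assumes "finite G" "finite A"
  shows "reach_within N G A n y \<in> sets (walk_space d)"
proof -
  have "reach_within N G A n y =
      (\<Union>k\<in>{..n}. {\<omega>. walk_pos N y \<omega> k \<in> G} \<inter> (\<Inter>j\<in>{..<k}. {\<omega>. walk_pos N y \<omega> j \<in> A}))"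
    unfolding reach_within_def by auto
  also have "\<dots> \<in> sets (walk_space d)"
    using sets_walk_pos_in[OF assms(1)] sets_walk_pos_in[OF assms(2)] sets.top[of "walk_space d"]
    by (intro sets.finite_UN sets.Int sets.countable_INT'') auto
  finally show ?thesis .
qed

lemma ex_le_Suc_shift:
  assumes "\<not> P 0" "Q 0"
  shows "(\<exists>k\<le>Suc n. P k \<and> (\<forall>j<k. Q j)) \<longleftrightarrow> (\<exists>k\<le>n. P (Suc k) \<and> (\<forall>j<k. Q (Suc j)))"
proof
  assume "\<exists>k\<le>Suc n. P k \<and> (\<forall>j<k. Q j)"
  then obtain k where k: "k \<le> Suc n" "P k" "\<forall>j<k. Q j" by blast
  with assms(1) obtain k' where "k = Suc k'" by (cases k) auto
  with k show "\<exists>k\<le>n. P (Suc k) \<and> (\<forall>j<k. Q (Suc j))" by auto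
next
  assume "\<exists>k\<le>n. P (Suc k) \<and> (\<forall>j<k. Q (Suc j))"
  then obtain k where k: "k \<le> n" "P (Suc k)" "\<forall>j<k. Q (Suc j)" by blast
  then have "\<forall>j<Suc k. Q j" using assms(2) by (auto simp: less_Suc_eq_0_disj)
  with k show "\<exists>k\<le>Suc n. P k \<and> (\<forall>j<k. Q j)" by (intro exI[of _ "Suc k"]) auto
qed

lemma reach_within_Suc:
  assumes "y \<in> torus N d" "y \<notin> G" "y \<in> A"
  shows "{\<omega>. case_nat e \<omega> \<in> reach_within N G A (Suc n) y} = reach_within N G A n (torus_step N y e)"
  unfolding reach_within_def
  using ex_le_Suc_shift[where P = "\<lambda>k. walk_pos N y (case_nat e \<omega>) k \<in> G"
      and Q = "\<lambda>k. walk_pos N y (case_nat e \<omega>) k \<in> A" for \<omega>]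
  by (simp add: walk_pos_0[OF assms(1)] assms(2,3) walk_pos_case_nat_Suc)

lemma measure_reach_within_Suc:
  assumes d: "d > 0" and fin: "finite G" "finite A"
    and y: "y \<in> torus N d" "y \<notin> G" "y \<in> A"
  shows "measure (walk_space d) (reach_within N G A (Suc n) y) =
     (\<Sum>e\<in>unit_steps d. measure (walk_space d) (reach_within N G A n (torus_step N y e)))
       / card (unit_steps d)"
proof -
  interpret W: prob_space "walk_space d" by (rule prob_space_walk_space)
  have "ennreal (measure (walk_space d) (reach_within N G A (Suc n) y)) =
      (\<Sum>e\<in>unit_steps d. emeasure (walk_space d) (reach_within N G A n (torus_step N y e)))
        / card (unit_steps d)"
    by (simp add: W.emeasure_eq_measure[symmetric] emeasure_walk_space_first_step[OF d sets_reach_within[OF fin]]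
        reach_within_Suc[OF y])
  also have "\<dots> = ennreal ((\<Sum>e\<in>unit_steps d. measure (walk_space d) (reach_within N G A n (torus_step N y e)))
        / card (unit_steps d))"
    by (simp add: W.emeasure_eq_measure sum_ennreal divide_ennreal card_gt_0_iff ennreal_of_nat_eq_real_of_nat
        sum_nonneg finite_unit_steps unit_steps_nonempty[OF d])
  finally show ?thesis by (simp add: sum_nonneg)
qed

text \<open>Optional stopping at the horizon \<open>n\<close>: \<open>\<phi>(X\<^sub>k) + k \<epsilon>\<close> is a submartingale until the walk
  enters \<open>G\<close> or leaves \<open>A\<close>, and \<open>\<phi> \<le> 1\<close> bounds it at the horizon.\<close>

lemma measure_reach_within_ge:
  fixes \<phi> :: "(nat \<Rightarrow> int) \<Rightarrow> real"
  assumes d: "d > 0" and fin: "finite G" "finite A" and \<epsilon>: "\<epsilon> > 0"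
    and le_1: "\<And>y. y \<in> torus N d \<Longrightarrow> \<phi> y \<le> 1"
    and outside: "\<And>y. y \<in> torus N d \<Longrightarrow> y \<notin> A \<Longrightarrow> \<phi> y \<le> 0"
    and drift: "\<And>y. y \<in> torus N d \<Longrightarrow> y \<in> A \<Longrightarrow> y \<notin> G \<Longrightarrow>
        \<phi> y + \<epsilon> \<le> (\<Sum>e\<in>unit_steps d. \<phi> (torus_step N y e)) / card (unit_steps d)"
    and y: "y \<in> torus N d"
  shows "\<phi> y - max 0 (1 - real n * \<epsilon>) \<le> measure (walk_space d) (reach_within N G A n y)"
  using y
proof (induction n arbitrary: y)
  case 0
  have "0 \<le> measure (walk_space d) (reach_within N G A 0 y)" by simp
  then show ?case using le_1[OF 0] by linarith
next
  case (Suc n)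
  interpret W: prob_space "walk_space d" by (rule prob_space_walk_space)
  let ?m = "measure (walk_space d)"
  have m0: "0 \<le> ?m (reach_within N G A (Suc n) y)" by simp
  consider "y \<in> G" | "y \<notin> G" "y \<notin> A" | "y \<notin> G" "y \<in> A" by blast
  then show ?case
  proof cases
    case 1
    then have "reach_within N G A (Suc n) y = space (walk_space d)"
      unfolding reach_within_def using walk_pos_0[OF Suc.prems] by force
    then show ?thesis using le_1[OF Suc.prems] W.prob_space by (simp add: max_def)
  next
    case 2
    then show ?thesis using outside[OF Suc.prems] m0 max.cobounded1[of 0] by (smt (verit))
  next
    case 3
    define a where "a = max 0 (1 - real n * \<epsilon>)"
    define C where "C = real (card (unit_steps d))"
    have C: "C > 0"
      unfolding C_def using finite_unit_steps unit_steps_nonempty[OF d] by (simp add: card_gt_0_iff)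
    have "(\<Sum>e\<in>unit_steps d. \<phi> (torus_step N y e)) / C - a =
        (\<Sum>e\<in>unit_steps d. \<phi> (torus_step N y e) - a) / C"
      using C by (simp add: sum_subtractf diff_divide_distrib C_def)
    also have "\<dots> \<le> (\<Sum>e\<in>unit_steps d. ?m (reach_within N G A n (torus_step N y e))) / C"
      using Suc.IH[OF torus_step_in_torus[OF Suc.prems]] C
      by (intro divide_right_mono sum_mono) (auto simp: a_def)
    also have "\<dots> = ?m (reach_within N G A (Suc n) y)"
      unfolding C_def using measure_reach_within_Suc[OF d fin Suc.prems 3] by simp
    finally have "(\<Sum>e\<in>unit_steps d. \<phi> (torus_step N y e)) / C - a \<le> ?m (reach_within N G A (Suc n) y)" .
    moreover have "a - \<epsilon> \<le> max 0 (1 - real (Suc n) * \<epsilon>)"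
      unfolding a_def using \<epsilon> by (auto simp: max_def algebra_simps)
    ultimately show ?thesis
      using drift[OF Suc.prems 3(2,1)] unfolding C_def by linarith
  qed
qed

lemma hit_time_less_iff:
  "hit_time N x \<omega> G < hit_time N x \<omega> D \<longleftrightarrow>
   (\<exists>k. walk_pos N x \<omega> k \<in> G \<and> (\<forall>j\<le>k. walk_pos N x \<omega> j \<notin> D))"
proof
  assume less: "hit_time N x \<omega> G < hit_time N x \<omega> D"
  then have ex: "\<exists>k. walk_pos N x \<omega> k \<in> G" unfolding hit_time_def by (auto split: if_splits)
  define K where "K = (LEAST k. walk_pos N x \<omega> k \<in> G)"
  have K: "walk_pos N x \<omega> K \<in> G" unfolding K_def using ex by (rule LeastI_ex)
  have "\<forall>j\<le>K. walk_pos N x \<omega> j \<notin> D"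
  proof (cases "\<exists>k. walk_pos N x \<omega> k \<in> D")
    case True
    then have "K < (LEAST k. walk_pos N x \<omega> k \<in> D)" using less ex unfolding hit_time_def K_def by auto
    then show ?thesis using not_less_Least by (metis le_less_trans)
  qed auto
  with K show "\<exists>k. walk_pos N x \<omega> k \<in> G \<and> (\<forall>j\<le>k. walk_pos N x \<omega> j \<notin> D)" by blast
next
  assume "\<exists>k. walk_pos N x \<omega> k \<in> G \<and> (\<forall>j\<le>k. walk_pos N x \<omega> j \<notin> D)"
  then obtain k where k: "walk_pos N x \<omega> k \<in> G" "\<forall>j\<le>k. walk_pos N x \<omega> j \<notin> D" by blast
  have le: "(LEAST k. walk_pos N x \<omega> k \<in> G) \<le> k" using k(1) by (rule Least_le)
  show "hit_time N x \<omega> G < hit_time N x \<omega> D"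
  proof (cases "\<exists>m. walk_pos N x \<omega> m \<in> D")
    case True
    have "k < (LEAST m. walk_pos N x \<omega> m \<in> D)"
      using LeastI_ex[OF True] k(2) by (metis not_le)
    then show ?thesis using le True k(1) unfolding hit_time_def by auto
  qed (use k(1) in \<open>auto simp: hit_time_def\<close>)
qed

lemma hit_before_prob_ge_reach_within:
  assumes "G' \<subseteq> G" "G' \<subseteq> A" "A \<inter> D = {}" "finite G" "finite D"
  shows "measure (walk_space d) (reach_within N G' A n x) \<le> hit_before_prob N d x G D"
proof -
  interpret W: prob_space "walk_space d" by (rule prob_space_walk_space)
  let ?H = "{\<omega> \<in> space (walk_space d). hit_time N x \<omega> G < hit_time N x \<omega> D}"
  have H: "?H = (\<Union>k. {\<omega>. walk_pos N x \<omega> k \<in> G} \<inter> (\<Inter>j\<in>{..k}. UNIV - {\<omega>. walk_pos N x \<omega> j \<in> D}))"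
    by (auto simp: hit_time_less_iff)
  have "?H \<in> sets (walk_space d)"
    unfolding H using sets_walk_pos_in[OF assms(4)] sets_walk_pos_in[OF assms(5)] sets.top[of "walk_space d"]
    by (intro sets.countable_UN' sets.Int sets.countable_INT'' sets.Diff) auto
  moreover have "reach_within N G' A n x \<subseteq> ?H"
  proof
    fix \<omega> assume "\<omega> \<in> reach_within N G' A n x"
    then obtain k where k: "walk_pos N x \<omega> k \<in> G'" "\<forall>j<k. walk_pos N x \<omega> j \<in> A"
      unfolding reach_within_def by auto
    then have "\<forall>j\<le>k. walk_pos N x \<omega> j \<notin> D"
      using assms(2,3) by (metis disjoint_iff le_neq_implies_less subsetD)
    with k(1) assms(1) show "\<omega> \<in> ?H" by (auto simp: hit_time_less_iff)
  qed
  ultimately show ?thesis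
    unfolding hit_before_prob_def by (rule W.finite_measure_mono[rotated])
qed

definition circ_dist :: "nat \<Rightarrow> int \<Rightarrow> int" where
  "circ_dist N t = min \<bar>t\<bar> (int N - \<bar>t\<bar>)"

text \<open>Squared Euclidean distance of the representatives in \<open>{0..N-1}^d\<close>, ignoring the wrap-around.\<close>

definition sqdist :: "nat \<Rightarrow> (nat \<Rightarrow> int) \<Rightarrow> (nat \<Rightarrow> int) \<Rightarrow> real" where
  "sqdist d c y = (\<Sum>i<d. (real_of_int (y i - c i))\<^sup>2)"

definition lattice_ball :: "nat \<Rightarrow> nat \<Rightarrow> (nat \<Rightarrow> int) \<Rightarrow> real \<Rightarrow> (nat \<Rightarrow> int) set" where
  "lattice_ball N d c r = {y \<in> torus N d. sqdist d c y \<le> r\<^sup>2}"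

lemma sqdist_nonneg: "0 \<le> sqdist d c y"
  unfolding sqdist_def by (simp add: sum_nonneg)

lemma coord_sq_le_sqdist: "i < d \<Longrightarrow> (real_of_int (y i - c i))\<^sup>2 \<le> sqdist d c y"
  unfolding sqdist_def by (intro member_le_sum) auto

lemma finite_lattice_ball: "finite (lattice_ball N d c r)"
  unfolding lattice_ball_def using finite_torus by simp

lemma lattice_ball_mono: "0 \<le> r \<Longrightarrow> r \<le> r' \<Longrightarrow> lattice_ball N d c r \<subseteq> lattice_ball N d c r'"
  unfolding lattice_ball_def using power_mono[of r r' 2] by (auto intro: order_trans)

lemma tdist_eq_L2_set: "tdist N d x y = L2_set (\<lambda>i. real_of_int (circ_dist N (x i - y i))) {..<d}"
  unfolding tdist_def L2_set_def circ_dist_def by simp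

lemma tdist_self: "tdist N d x x = 0"
  unfolding tdist_def by simp

lemma circ_dist_bounds:
  assumes "0 \<le> a" "a < int N" "0 \<le> b" "b < int N"
  shows "0 \<le> circ_dist N (a - b)" "circ_dist N (a - b) \<le> \<bar>a - b\<bar>"
  using assms by (auto simp: circ_dist_def)

lemma circ_dist_triangle:
  assumes "0 \<le> a" "a < int N" "0 \<le> b" "b < int N" "0 \<le> c" "c < int N"
  shows "circ_dist N (a - c) \<le> circ_dist N (a - b) + circ_dist N (b - c)"
  using assms unfolding circ_dist_def by (cases "a \<le> b"; cases "b \<le> c") (auto simp: min_def abs_if)

lemma tdist_triangle:
  assumes "x \<in> torus N d" "y \<in> torus N d" "z \<in> torus N d"
  shows "tdist N d x z \<le> tdist N d x y + tdist N d y z"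
proof -
  have "tdist N d x z \<le>
      L2_set (\<lambda>i. real_of_int (circ_dist N (x i - y i)) + real_of_int (circ_dist N (y i - z i))) {..<d}"
    unfolding tdist_eq_L2_set
  proof (rule L2_set_mono)
    fix i assume "i \<in> {..<d}"
    then have "0 \<le> x i" "x i < int N" "0 \<le> y i" "y i < int N" "0 \<le> z i" "z i < int N"
      using assms by (auto simp: torus_def)
    from circ_dist_triangle[OF this] circ_dist_bounds(1)[OF this(1,2,5,6)]
    show "0 \<le> real_of_int (circ_dist N (x i - z i))"
      "real_of_int (circ_dist N (x i - z i)) \<le>
        real_of_int (circ_dist N (x i - y i)) + real_of_int (circ_dist N (y i - z i))"
      by linarith+
  qed
  also have "\<dots> \<le> tdist N d x y + tdist N d y z"
    unfolding tdist_eq_L2_set by (rule L2_set_triangle_ineq)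
  finally show ?thesis .
qed

lemma tdist_le_sqrt_sqdist:
  assumes "x \<in> torus N d" "y \<in> torus N d"
  shows "tdist N d x y \<le> sqrt (sqdist d x y)"
proof -
  have "tdist N d x y \<le> L2_set (\<lambda>i. real_of_int \<bar>y i - x i\<bar>) {..<d}"
    unfolding tdist_eq_L2_set
  proof (rule L2_set_mono)
    fix i assume "i \<in> {..<d}"
    then have "0 \<le> x i" "x i < int N" "0 \<le> y i" "y i < int N"
      using assms by (auto simp: torus_def)
    from circ_dist_bounds[OF this] show "0 \<le> real_of_int (circ_dist N (x i - y i))"
      "real_of_int (circ_dist N (x i - y i)) \<le> real_of_int \<bar>y i - x i\<bar>"
      by (simp_all add: abs_minus_commute)
  qed
  also have "\<dots> = sqrt (sqdist d x y)" unfolding L2_set_def sqdist_def by simp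
  finally show ?thesis .
qed

lemma lattice_ball_subset_tball:
  assumes "c \<in> torus N d" "0 \<le> r"
  shows "lattice_ball N d c r \<subseteq> tball N d c r"
proof
  fix y assume "y \<in> lattice_ball N d c r"
  then have y: "y \<in> torus N d" "sqdist d c y \<le> r\<^sup>2" unfolding lattice_ball_def by auto
  have "tdist N d c y \<le> sqrt (r\<^sup>2)"
    using tdist_le_sqrt_sqdist[OF assms(1) y(1)] real_sqrt_le_mono[OF y(2)] by linarith
  with y(1) assms(2) show "y \<in> tball N d c r" unfolding tball_def by simp
qed

text \<open>Far from the faces of the fundamental domain the torus distance is the Euclidean one.\<close>

lemma tball_subset_lattice_ball:
  assumes c: "\<And>i. i < d \<Longrightarrow> L \<le> real_of_int (c i) \<and> real_of_int (c i) \<le> real N - L"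
    and "0 \<le> r" "r < L"
  shows "tball N d c r \<subseteq> lattice_ball N d c r"
proof
  fix x assume "x \<in> tball N d c r"
  then have x: "x \<in> torus N d" and dist: "tdist N d c x \<le> r" unfolding tball_def by auto
  have circ: "circ_dist N (c i - x i) = \<bar>x i - c i\<bar>" if i: "i < d" for i
  proof -
    have "real_of_int (circ_dist N (c i - x i)) \<le> tdist N d c x"
      unfolding tdist_eq_L2_set by (rule member_le_L2_set) (use i in auto)
    moreover have "0 \<le> x i" "x i < int N" using x i unfolding torus_def by auto
    ultimately show ?thesis
      using c[OF i] dist \<open>r < L\<close> unfolding circ_dist_def min_def by (auto split: if_splits simp: abs_if)
  qed
  have "tdist N d c x = sqrt (sqdist d c x)"
    unfolding tdist_eq_L2_set L2_set_def sqdist_def by (simp add: circ)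
  with dist \<open>0 \<le> r\<close> have "sqdist d c x \<le> r\<^sup>2"
    using sqdist_nonneg by (metis real_sqrt_le_iff real_sqrt_unique)
  with x show "x \<in> lattice_ball N d c r" unfolding lattice_ball_def by simp
qed

lemma exp_plus_exp_minus_ge: "2 + q\<^sup>2 / 2 \<le> exp q + exp (- q :: real)"
proof -
  have "exp q + exp (- q) = exp \<bar>q\<bar> + exp (- \<bar>q\<bar>)" by (cases "0 \<le> q") auto
  then show ?thesis
    using exp_lower_Taylor_quadratic[of "\<bar>q\<bar>"] exp_ge_add_one_self[of "- \<bar>q\<bar>"] by simp
qed

lemma exp_pair_ge: "exp (p::real) * (2 + q\<^sup>2 / 2) \<le> exp (p + q) + exp (p - q)"
  using mult_left_mono[OF exp_plus_exp_minus_ge[of q], of "exp p"]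
  by (simp add: exp_add exp_diff exp_minus distrib_left field_simps)

lemma one_less_exp_neg_mult:
  fixes \<mu> :: real
  assumes "0 < \<mu>" "\<mu> \<le> 1/4"
  shows "1 < exp (- \<mu>) * (1 + 2 * \<mu>)"
proof -
  have "1 < (1 - \<mu>) * (1 + 2 * \<mu>)"
    using mult_pos_pos[of \<mu> "1 - 2 * \<mu>"] assms by (simp add: algebra_simps)
  also have "\<dots> \<le> exp (- \<mu>) * (1 + 2 * \<mu>)"
    using exp_ge_add_one_self[of "- \<mu>"] assms by (intro mult_right_mono) auto
  finally show ?thesis .
qed

lemma torus_step_unit_vec:
  assumes y: "y \<in> torus N d" and s: "s \<in> {1, -1}" and interior: "1 \<le> y i" "y i \<le> int N - 2"
  shows "torus_step N y (unit_vec i s) = y(i := y i + s)"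
proof
  fix j
  have "y j mod int N = y j"
    using y unfolding torus_def by (cases "j < d") (auto simp: mod_pos_pos_trivial)
  then show "torus_step N y (unit_vec i s) j = (y(i := y i + s)) j"
    using interior s by (auto simp: torus_step_def unit_vec_def mod_pos_pos_trivial)
qed

lemma sqdist_torus_step_unit_vec:
  assumes "y \<in> torus N d" "i < d" "s \<in> {1, -1}" "1 \<le> y i" "y i \<le> int N - 2"
  shows "sqdist d c (torus_step N y (unit_vec i s)) =
    sqdist d c y + 2 * real_of_int s * real_of_int (y i - c i) + 1"
proof -
  let ?f = "\<lambda>y j. (real_of_int (y j - c j))\<^sup>2"
  have "sqdist d c (y(i := y i + s)) = ?f (y(i := y i + s)) i + (\<Sum>j\<in>{..<d} - {i}. ?f y j)"
    unfolding sqdist_def using assms(2) by (subst sum.remove[of _ i]) auto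
  moreover have "sqdist d c y = ?f y i + (\<Sum>j\<in>{..<d} - {i}. ?f y j)"
    unfolding sqdist_def using assms(2) by (subst sum.remove[of _ i]) auto
  moreover have "?f (y(i := y i + s)) i = ?f y i + 2 * real_of_int s * real_of_int (y i - c i) + 1"
    using assms(3) by (auto simp: power2_eq_square algebra_simps)
  ultimately show ?thesis using torus_step_unit_vec[OF assms(1,3-5)] by simp
qed

text \<open>Averaging \<open>exp (- \<mu> |y - c|\<^sup>2)\<close> over the \<open>2 d\<close> neighbours: each coordinate contributes
  \<open>exp (- \<mu> (s + 1)) (exp (2 \<mu> a) + exp (- 2 \<mu> a))\<close>, and the quadratic term of the two exponentials
  beats the loss \<open>exp (- \<mu>)\<close> once \<open>\<mu> |y - c|\<^sup>2 \<ge> 2 d\<close>.\<close>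

lemma sum_gaussian_torus_step_ge:
  fixes \<mu> :: real
  assumes y: "y \<in> torus N d"
    and interior: "\<And>i. i < d \<Longrightarrow> 1 \<le> y i \<and> y i \<le> int N - 2"
    and "0 \<le> \<mu>" and large: "2 * real d \<le> \<mu> * sqdist d c y"
  shows "2 * real d * (exp (- \<mu> * sqdist d c y) * (exp (- \<mu>) * (1 + 2 * \<mu>)))
    \<le> (\<Sum>e\<in>unit_steps d. exp (- \<mu> * sqdist d c (torus_step N y e)))"
proof -
  define s where "s = sqdist d c y"
  define a where "a i = real_of_int (y i - c i)" for i
  have s: "s = (\<Sum>i<d. (a i)\<^sup>2)" unfolding s_def sqdist_def a_def by simp
  have "2 * real d * (exp (- \<mu> * s) * (exp (- \<mu>) * (1 + 2 * \<mu>))) = exp (- \<mu> * (s + 1)) * (2 * d + 4 * \<mu> * d)"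
    by (simp add: algebra_simps exp_add[symmetric])
  also have "\<dots> \<le> exp (- \<mu> * (s + 1)) * (2 * d + 2 * \<mu>\<^sup>2 * s)"
    using mult_left_mono[OF large \<open>0 \<le> \<mu>\<close>] unfolding s_def
    by (intro mult_left_mono) (auto simp: power2_eq_square algebra_simps)
  also have "\<dots> = (\<Sum>i<d. exp (- \<mu> * (s + 1)) * (2 + (- 2 * \<mu> * a i)\<^sup>2 / 2))"
    by (simp add: s sum.distrib sum_distrib_left sum_distrib_right power_mult_distrib algebra_simps)
  also have "\<dots> \<le> (\<Sum>i<d. exp (- \<mu> * (s + 1) + - 2 * \<mu> * a i) + exp (- \<mu> * (s + 1) - - 2 * \<mu> * a i))"
    by (intro sum_mono exp_pair_ge)
  also have "\<dots> = (\<Sum>e\<in>unit_steps d. exp (- \<mu> * sqdist d c (torus_step N y e)))"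
    unfolding sum_unit_steps using interior
    by (intro sum.cong) (auto simp: sqdist_torus_step_unit_vec[OF y] s_def a_def algebra_simps)
  finally show ?thesis unfolding s_def .
qed

lemma gaussian_drift:
  fixes \<mu> K :: real
  assumes d: "d > 0" and y: "y \<in> torus N d"
    and interior: "\<And>i. i < d \<Longrightarrow> 1 \<le> y i \<and> y i \<le> int N - 2"
    and \<mu>: "0 < \<mu>" "\<mu> \<le> 1/4" and large: "2 * real d \<le> \<mu> * sqdist d c y"
    and K: "0 \<le> K" "K \<le> exp (- \<mu> * sqdist d c y)"
  shows "(exp (- \<mu> * sqdist d c y) - K) + K * (exp (- \<mu>) * (1 + 2 * \<mu>) - 1)
    \<le> (\<Sum>e\<in>unit_steps d. exp (- \<mu> * sqdist d c (torus_step N y e)) - K) / card (unit_steps d)"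
proof -
  define g where "g = exp (- \<mu> * sqdist d c y)"
  define \<delta> where "\<delta> = exp (- \<mu>) * (1 + 2 * \<mu>)"
  have "1 < \<delta>" unfolding \<delta>_def by (rule one_less_exp_neg_mult[OF \<mu>])
  then have "(g - K) + K * (\<delta> - 1) \<le> g * \<delta> - K"
    using mult_right_mono[OF K(2), of "\<delta> - 1"] unfolding g_def by (simp add: algebra_simps)
  also have "\<dots> \<le> (\<Sum>e\<in>unit_steps d. exp (- \<mu> * sqdist d c (torus_step N y e))) / (2 * d) - K"
    using sum_gaussian_torus_step_ge[OF y interior _ large] \<mu> d
    unfolding g_def \<delta>_def by (simp add: field_simps)
  finally show ?thesis
    unfolding g_def \<delta>_def using d by (simp add: card_unit_steps sum_subtractf diff_divide_distrib)
qed

lemma reach_lattice_ball_ge_gaussian: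
  fixes d N :: nat and \<rho> R\<^sub>2 :: real
  defines "\<mu> \<equiv> 2 * real d / \<rho>\<^sup>2"
  assumes d: "d > 0" and \<rho>: "0 < \<rho>" "\<mu> \<le> 1/4" and "0 \<le> R\<^sub>2"
    and c: "\<And>i. i < d \<Longrightarrow> R\<^sub>2 + 1 \<le> real_of_int (c i) \<and> real_of_int (c i) \<le> real N - 2 - R\<^sub>2"
    and x: "x \<in> torus N d"
  shows "\<exists>n. exp (- \<mu> * sqdist d c x) - exp (- \<mu> * R\<^sub>2\<^sup>2) \<le>
    measure (walk_space d) (reach_within N (lattice_ball N d c \<rho>) (lattice_ball N d c R\<^sub>2) n x)"
proof -
  define K where "K = exp (- \<mu> * R\<^sub>2\<^sup>2)"
  define \<phi> where "\<phi> y = exp (- \<mu> * sqdist d c y) - K" for y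
  define \<epsilon> where "\<epsilon> = K * (exp (- \<mu>) * (1 + 2 * \<mu>) - 1)"
  have \<mu>0: "0 < \<mu>" unfolding \<mu>_def using d \<rho> by simp
  have \<epsilon>: "0 < \<epsilon>" unfolding \<epsilon>_def K_def using one_less_exp_neg_mult[OF \<mu>0 \<rho>(2)] by simp
  define n where "n = nat \<lceil>1 / \<epsilon>\<rceil>"
  have "1 / \<epsilon> \<le> real n" unfolding n_def by linarith
  then have "1 \<le> real n * \<epsilon>" using \<epsilon> by (simp add: divide_le_eq)
  moreover have "\<phi> x - max 0 (1 - real n * \<epsilon>) \<le>
      measure (walk_space d) (reach_within N (lattice_ball N d c \<rho>) (lattice_ball N d c R\<^sub>2) n x)"
  proof (rule measure_reach_within_ge[OF d finite_lattice_ball finite_lattice_ball \<epsilon> _ _ _ x])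
    fix y
    have "exp (- \<mu> * sqdist d c y) \<le> 1" using \<mu>0 sqdist_nonneg[of d c y] by simp
    then show "\<phi> y \<le> 1" unfolding \<phi>_def K_def using exp_gt_zero[of "- \<mu> * R\<^sub>2\<^sup>2"] by linarith
    assume y: "y \<in> torus N d"
    show "\<phi> y \<le> 0" if "y \<notin> lattice_ball N d c R\<^sub>2"
      using that y \<mu>0 unfolding \<phi>_def K_def lattice_ball_def by simp
    assume in_outer: "y \<in> lattice_ball N d c R\<^sub>2" and not_inner: "y \<notin> lattice_ball N d c \<rho>"
    have sq: "sqdist d c y \<le> R\<^sub>2\<^sup>2" "\<rho>\<^sup>2 < sqdist d c y"
      using y in_outer not_inner unfolding lattice_ball_def by auto
    have "1 \<le> y i \<and> y i \<le> int N - 2" if i: "i < d" for i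
    proof -
      have "\<bar>real_of_int (y i - c i)\<bar> \<le> R\<^sub>2"
        using order_trans[OF coord_sq_le_sqdist[OF i] sq(1)] \<open>0 \<le> R\<^sub>2\<close>
        by (metis abs_le_square_iff abs_of_nonneg)
      with c[OF i] show ?thesis by (simp add: abs_le_iff)
    qed
    moreover have "2 * real d \<le> \<mu> * sqdist d c y"
      using mult_strict_left_mono[OF sq(2) \<mu>0] \<rho> unfolding \<mu>_def by simp
    moreover have "K \<le> exp (- \<mu> * sqdist d c y)"
      unfolding K_def using sq(1) \<mu>0 by simp
    ultimately show "\<phi> y + \<epsilon> \<le> (\<Sum>e\<in>unit_steps d. \<phi> (torus_step N y e)) / real (card (unit_steps d))"
      unfolding \<phi>_def \<epsilon>_def using gaussian_drift[OF d y _ \<mu>0 \<rho>(2)] by (simp add: K_def)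
  qed
  ultimately show ?thesis unfolding \<phi>_def K_def by (intro exI[of _ n]) simp
qed

text \<open>Rounding \<open>t a\<close> towards zero: the remainder of \<open>a\<close> is at most \<open>(1 - t) |a| + 1\<close>.\<close>

lemma shrink_int:
  fixes a :: int and t :: real
  assumes t: "0 \<le> t" "t \<le> 1"
  defines "w \<equiv> sgn a * \<lfloor>t * real_of_int \<bar>a\<bar>\<rfloor>"
  shows "\<bar>w\<bar> \<le> \<bar>a\<bar>"
    and "(real_of_int w)\<^sup>2 \<le> t\<^sup>2 * (real_of_int a)\<^sup>2"
    and "(real_of_int (a - w))\<^sup>2 \<le> 2 * (1 - t)\<^sup>2 * (real_of_int a)\<^sup>2 + 2"
proof -
  define f where "f = \<lfloor>t * real_of_int \<bar>a\<bar>\<rfloor>"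
  define A where "A = real_of_int \<bar>a\<bar>"
  have A: "0 \<le> A" "t * A \<le> A" unfolding A_def using t by (auto simp: mult_left_le_one_le)
  have f: "0 \<le> f" "real_of_int f \<le> t * A" "t * A - 1 < real_of_int f"
    unfolding f_def A_def using t by auto
  then have "f \<le> \<bar>a\<bar>" using A unfolding A_def by linarith
  then have abs_w: "\<bar>w\<bar> = f" and abs_rest: "\<bar>a - w\<bar> = \<bar>a\<bar> - f"
    unfolding w_def f_def[symmetric] using f(1) by (auto simp: sgn_if abs_mult)
  then show "\<bar>w\<bar> \<le> \<bar>a\<bar>" using \<open>f \<le> \<bar>a\<bar>\<close> by simp
  have "(real_of_int w)\<^sup>2 = (real_of_int f)\<^sup>2" by (metis abs_w of_int_abs power2_abs)
  also have "\<dots> \<le> (t * A)\<^sup>2" using f by (intro power_mono) auto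
  finally show "(real_of_int w)\<^sup>2 \<le> t\<^sup>2 * (real_of_int a)\<^sup>2" unfolding A_def by (simp add: power_mult_distrib)
  have "(real_of_int (a - w))\<^sup>2 = (A - real_of_int f)\<^sup>2"
    unfolding A_def by (metis abs_rest of_int_abs of_int_diff power2_abs)
  also have "\<dots> \<le> ((1 - t) * A + 1)\<^sup>2" using f A by (intro power_mono) (auto simp: algebra_simps)
  also have "\<dots> \<le> 2 * ((1 - t) * A)\<^sup>2 + 2"
    using sum_squares_bound[of "(1 - t) * A" 1] by (simp add: power2_eq_square algebra_simps)
  finally show "(real_of_int (a - w))\<^sup>2 \<le> 2 * (1 - t)\<^sup>2 * (real_of_int a)\<^sup>2 + 2"
    unfolding A_def by (simp add: power_mult_distrib)
qed

text \<open>Shrink \<open>y - c\<close> by the factor \<open>R / |y - c|\<close> and round each coordinate towards zero;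
  \<open>4 d \<le> P\<^sup>2\<close> absorbs the rounding errors.\<close>

lemma exists_lattice_ball_point_near:
  assumes c: "\<And>i. i < d \<Longrightarrow> R\<^sub>2 \<le> real_of_int (c i) \<and> real_of_int (c i) < real N - R\<^sub>2"
    and y: "y \<in> torus N d" and R: "0 < R" "R\<^sup>2 < sqdist d c y"
    and R\<^sub>2: "sqdist d c y \<le> R\<^sub>2\<^sup>2" "0 \<le> R\<^sub>2" "R\<^sub>2 - R \<le> P / 2"
    and P: "4 * real d \<le> P\<^sup>2"
  shows "\<exists>z\<in>lattice_ball N d c R. sqdist d z y \<le> P\<^sup>2"
proof -
  define r where "r = sqrt (sqdist d c y)"
  define t where "t = R / r"
  have r: "R < r" "r \<le> R\<^sub>2" "r\<^sup>2 = sqdist d c y"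
    unfolding r_def using R R\<^sub>2 sqdist_nonneg real_less_rsqrt real_sqrt_le_iff by (auto intro: real_le_lsqrt)
  have t: "0 \<le> t" "t \<le> 1" using R r unfolding t_def by auto
  define w where "w i = sgn (y i - c i) * \<lfloor>t * real_of_int \<bar>y i - c i\<bar>\<rfloor>" for i
  define z where "z i = (if i < d then c i + w i else 0)" for i
  note shrink = shrink_int[OF t, of "y i - c i" for i, folded w_def]
  have "z \<in> torus N d"
    unfolding torus_def
  proof (intro CollectI conjI allI impI)
    fix i assume i: "i < d"
    have "\<bar>real_of_int (y i - c i)\<bar> \<le> R\<^sub>2"
      using order_trans[OF coord_sq_le_sqdist[OF i] R\<^sub>2(1)] R\<^sub>2(2) by (metis abs_le_square_iff abs_of_nonneg)
    then have "\<bar>real_of_int (w i)\<bar> \<le> R\<^sub>2" using shrink(1)[of i] by (metis of_int_abs of_int_le_iff order_trans)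
    with c[OF i] show "0 \<le> z i" "z i < int N" unfolding z_def using i by (auto simp: abs_le_iff)
  qed (simp add: z_def)
  moreover have "sqdist d c z \<le> R\<^sup>2"
  proof -
    have "sqdist d c z = (\<Sum>i<d. (real_of_int (w i))\<^sup>2)" unfolding sqdist_def z_def by simp
    also have "\<dots> \<le> (\<Sum>i<d. t\<^sup>2 * (real_of_int (y i - c i))\<^sup>2)" by (intro sum_mono shrink(2))
    also have "\<dots> = t\<^sup>2 * r\<^sup>2" unfolding r(3) sqdist_def by (simp add: sum_distrib_left)
    also have "\<dots> = R\<^sup>2" using r(1) R(1) unfolding t_def by (simp add: power_divide)
    finally show ?thesis .
  qed
  moreover have "sqdist d z y \<le> P\<^sup>2"
  proof -
    have "sqdist d z y = (\<Sum>i<d. (real_of_int ((y i - c i) - w i))\<^sup>2)"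
      unfolding sqdist_def z_def by (intro sum.cong) (auto simp: algebra_simps)
    also have "\<dots> \<le> (\<Sum>i<d. 2 * (1 - t)\<^sup>2 * (real_of_int (y i - c i))\<^sup>2 + 2)"
      by (intro sum_mono shrink(3))
    also have "\<dots> = 2 * (1 - t)\<^sup>2 * r\<^sup>2 + 2 * real d"
      unfolding r(3) sqdist_def by (simp add: sum.distrib sum_distrib_left)
    also have "\<dots> = 2 * (r - R)\<^sup>2 + 2 * real d"
      using r(1) R(1) unfolding t_def by (simp add: power2_eq_square field_simps)
    also have "\<dots> \<le> 2 * (P / 2)\<^sup>2 + P\<^sup>2 / 2" using r R\<^sub>2 P by (intro add_mono mult_left_mono power_mono) auto
    finally show ?thesis by (simp add: power_divide)
  qed
  ultimately show ?thesis unfolding lattice_ball_def by blast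
qed

lemma Bset_subset_torus: "Bset d \<gamma> chi N \<subseteq> torus N d"
  unfolding Bset_def tball_def by auto

lemma tball_center_subset_Bset: "c \<in> centers d \<gamma> chi N \<Longrightarrow> tball N d c (chi * real N) \<subseteq> Bset d \<gamma> chi N"
  unfolding Bset_def by auto

lemma lattice_ball_subset_Gset:
  fixes N d :: nat and \<gamma> chi :: real
  defines "R \<equiv> chi * real N"
  assumes c: "c \<in> centers d \<gamma> chi N" and x: "x \<in> tbdry N d (Bset d \<gamma> chi N)" and R: "4 \<le> R"
  shows "lattice_ball N d c (R / 4) \<subseteq> Gset d \<gamma> chi N"
proof
  fix y assume "y \<in> lattice_ball N d c (R / 4)"
  then have y: "y \<in> tball N d c (R / 4)"
    using lattice_ball_subset_tball[of c N d "R / 4"] c R unfolding centers_def by auto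
  then have yt: "y \<in> torus N d" and cy: "tdist N d c y \<le> R / 4" unfolding tball_def by auto
  have "y \<in> Bset d \<gamma> chi N"
    using tball_center_subset_Bset[OF c] y R unfolding tball_def R_def by auto
  moreover have "R / 2 \<le> tsetdist N d y (tbdry N d (Bset d \<gamma> chi N))"
    unfolding tsetdist_def
  proof (rule cInf_greatest)
    show "tdist N d y ` tbdry N d (Bset d \<gamma> chi N) \<noteq> {}" using x by auto
    fix v assume "v \<in> tdist N d y ` tbdry N d (Bset d \<gamma> chi N)"
    then obtain w w' where v: "v = tdist N d y w" and w: "w \<in> Bset d \<gamma> chi N"
      and w': "w' \<in> torus N d" "w' \<notin> Bset d \<gamma> chi N" "tdist N d w w' = 1"
      unfolding tbdry_def by auto
    have far: "R < tdist N d c w'" using w' tball_center_subset_Bset[OF c] unfolding tball_def R_def by force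
    have ct: "c \<in> torus N d" using c unfolding centers_def by simp
    have "w \<in> torus N d" using w Bset_subset_torus[of d \<gamma> chi N] by blast
    then have "tdist N d c w' \<le> tdist N d c y + tdist N d y w + tdist N d w w'"
      using tdist_triangle[OF ct yt] tdist_triangle[OF ct _ w'(1)] by (meson add_right_mono order_trans)
    then show "R / 2 \<le> v" using far v cy w'(3) R by linarith
  qed
  ultimately show "y \<in> Gset d \<gamma> chi N" unfolding Gset_def R_def by auto
qed

text \<open>The ball of radius \<open>\<chi> N + N\<^sup>\<gamma>/2\<close> around a center lies in the \<open>N\<^sup>\<gamma>\<close>-neighbourhood of \<open>B\<close>.\<close>

lemma lattice_ball_disjoint_Delta:
  fixes N d :: nat and \<gamma> chi :: real
  defines "R \<equiv> chi * real N" and "P \<equiv> real N powr \<gamma>"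
  assumes c: "c \<in> centers d \<gamma> chi N" and P: "4 * real d \<le> P\<^sup>2" and R: "0 < R"
  shows "lattice_ball N d c (R + P / 2) \<inter> Delta d \<gamma> chi N = {}"
proof -
  have "N > 0" using R unfolding R_def by (cases N) auto
  then have P0: "0 < P" unfolding P_def by simp
  have c_torus: "c \<in> torus N d" and L: "\<And>i. i < d \<Longrightarrow>
      2 * P + R \<le> real_of_int (c i) \<and> real_of_int (c i) \<le> real N - (2 * P + R)"
    using c unfolding centers_def Lval_def P_def R_def by auto
  have in_Bset: "lattice_ball N d c R \<subseteq> Bset d \<gamma> chi N"
    using order_trans[OF lattice_ball_subset_tball[OF c_torus] tball_center_subset_Bset[OF c, folded R_def]] R
    by simp
  have "\<exists>z\<in>Bset d \<gamma> chi N. y \<in> tball N d z P" if y: "y \<in> lattice_ball N d c (R + P / 2)" for y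
  proof (cases "y \<in> lattice_ball N d c R")
    case True
    then show ?thesis
      using in_Bset y P0 by (intro bexI[of _ y]) (auto simp: lattice_ball_def tball_def tdist_self)
  next
    case False
    then have y': "y \<in> torus N d" "R\<^sup>2 < sqdist d c y" "sqdist d c y \<le> (R + P / 2)\<^sup>2"
      using y unfolding lattice_ball_def by auto
    obtain z where z: "z \<in> lattice_ball N d c R" "sqdist d z y \<le> P\<^sup>2"
      using exists_lattice_ball_point_near[of d "R + P / 2" c N y R P] L y' R P0 P by fastforce
    have "tdist N d z y \<le> sqrt (P\<^sup>2)"
      using tdist_le_sqrt_sqdist[of z N d y] z y' real_sqrt_le_mono[OF z(2)]
      unfolding lattice_ball_def by force
    then show ?thesis using z(1) in_Bset y' P0 unfolding tball_def by auto
  qed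
  then show ?thesis unfolding Delta_def P_def by blast
qed

lemma gaussian_gap_ge:
  fixes d :: nat and R P s :: real
  defines "\<mu> \<equiv> 32 * real d / R\<^sup>2"
  assumes d: "d > 0" and R: "0 < R" and P: "0 < P" "P \<le> 2 * R" and s: "0 \<le> s" "s \<le> R\<^sup>2"
  shows "exp (- 32 * real d) * (32 * real d * P / R) / (1 + 96 * real d)
    \<le> exp (- \<mu> * s) - exp (- \<mu> * (R + P / 2)\<^sup>2)"
proof -
  define T where "T = \<mu> * (P * R + P\<^sup>2 / 4)"
  have \<mu>: "0 < \<mu>" "\<mu> * R\<^sup>2 = 32 * real d" unfolding \<mu>_def using d R by auto
  have T: "0 \<le> T" unfolding T_def using \<mu> P R by simp
  have "32 * real d * P / R = \<mu> * (P * R)"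
    using \<mu>(2) R by (simp add: power2_eq_square field_simps)
  also have "\<dots> \<le> T" unfolding T_def using \<mu> by (intro mult_left_mono) auto
  finally have T_lower: "32 * real d * P / R \<le> T" .
  have "P * R \<le> 2 * R\<^sup>2" "P\<^sup>2 \<le> (2 * R)\<^sup>2"
    using mult_right_mono[OF P(2), of R] power_mono[OF P(2), of 2] P R by (auto simp: power2_eq_square)
  then have "P * R + P\<^sup>2 / 4 \<le> 3 * R\<^sup>2" by (simp add: power_mult_distrib)
  then have "T \<le> \<mu> * (3 * R\<^sup>2)" unfolding T_def using \<mu>(1) by (intro mult_left_mono) auto
  then have T_upper: "T \<le> 96 * real d" using \<mu>(2) by simp
  have "32 * real d * P / R / (1 + 96 * real d) \<le> T / (1 + T)"
    using T_lower T_upper T by (intro frac_le) auto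
  also have "\<dots> \<le> 1 - exp (- T)"
    using exp_ge_add_one_self[of T] T by (simp add: exp_minus field_simps)
  finally have "exp (- 32 * real d) * (32 * real d * P / R / (1 + 96 * real d))
      \<le> exp (- 32 * real d) * (1 - exp (- T))" by (intro mult_left_mono) auto
  also have "\<dots> \<le> exp (- \<mu> * s) - exp (- \<mu> * (R + P / 2)\<^sup>2)"
  proof -
    have "exp (- 32 * real d) \<le> exp (- \<mu> * s)" using mult_left_mono[OF s(2), of \<mu>] \<mu> by simp
    moreover have "exp (- \<mu> * (R + P / 2)\<^sup>2) = exp (- 32 * real d) * exp (- T)"
      using \<mu>(2) unfolding T_def by (simp add: mult_exp_exp power2_eq_square algebra_simps)
    ultimately show ?thesis by (simp add: right_diff_distrib)
  qed
  finally show ?thesis by simp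
qed

lemma hit_before_prob_ge:
  fixes N d :: nat and \<gamma> chi :: real
  defines "P \<equiv> real N powr \<gamma>" and "R \<equiv> chi * real N"
  assumes d: "d > 0" and P: "2 \<le> P" "4 * real d \<le> P\<^sup>2" "P \<le> 2 * R" and R: "4 \<le> R" "128 * real d \<le> R\<^sup>2"
    and x: "x \<in> tbdry N d (Bset d \<gamma> chi N)"
  shows "exp (- 32 * real d) * (32 * real d * P / R) / (1 + 96 * real d)
    \<le> hit_before_prob N d x (Gset d \<gamma> chi N) (Delta d \<gamma> chi N)"
proof -
  obtain c where c: "c \<in> centers d \<gamma> chi N" and xc: "x \<in> tball N d c R"
    using x unfolding tbdry_def Bset_def R_def by auto
  have c_bounds: "\<And>i. i < d \<Longrightarrow> 2 * P + R \<le> real_of_int (c i) \<and> real_of_int (c i) \<le> real N - (2 * P + R)"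
    using c unfolding centers_def Lval_def P_def R_def by auto
  have "tball N d c R \<subseteq> lattice_ball N d c R"
    by (rule tball_subset_lattice_ball[of d "2 * P + R"]) (use c_bounds R P in auto)
  with xc have "x \<in> lattice_ball N d c R" by blast
  then have x_torus: "x \<in> torus N d" and sx: "sqdist d c x \<le> R\<^sup>2" unfolding lattice_ball_def by auto
  define \<mu> where "\<mu> = 32 * real d / R\<^sup>2"
  have \<mu>: "\<mu> = 2 * real d / (R / 4)\<^sup>2" "\<mu> \<le> 1/4"
    unfolding \<mu>_def using R by (auto simp: power_divide field_simps)
  have c_inner: "R + P / 2 + 1 \<le> real_of_int (c i) \<and> real_of_int (c i) \<le> real N - 2 - (R + P / 2)"
    if "i < d" for i
    using c_bounds[OF that] P by linarith
  obtain n where n: "exp (- \<mu> * sqdist d c x) - exp (- \<mu> * (R + P / 2)\<^sup>2) \<le> measure (walk_space d)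
      (reach_within N (lattice_ball N d c (R / 4)) (lattice_ball N d c (R + P / 2)) n x)"
    using reach_lattice_ball_ge_gaussian[where \<rho> = "R / 4" and R\<^sub>2 = "R + P / 2" and c = c,
        OF d _ \<mu>(2)[unfolded \<mu>(1)] _ c_inner x_torus, folded \<mu>(1)] R P
    by auto
  have "measure (walk_space d) (reach_within N (lattice_ball N d c (R / 4)) (lattice_ball N d c (R + P / 2)) n x)
      \<le> hit_before_prob N d x (Gset d \<gamma> chi N) (Delta d \<gamma> chi N)"
  proof (rule hit_before_prob_ge_reach_within)
    show "lattice_ball N d c (R / 4) \<subseteq> Gset d \<gamma> chi N"
      using lattice_ball_subset_Gset[OF c x] R unfolding R_def by simp
    show "lattice_ball N d c (R / 4) \<subseteq> lattice_ball N d c (R + P / 2)"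
      using R P by (intro lattice_ball_mono) auto
    show "lattice_ball N d c (R + P / 2) \<inter> Delta d \<gamma> chi N = {}"
      using lattice_ball_disjoint_Delta[OF c] P R unfolding P_def R_def by simp
    show "finite (Gset d \<gamma> chi N)" "finite (Delta d \<gamma> chi N)"
      using Bset_subset_torus[of d \<gamma> chi N] finite_torus[of N d]
      by (auto simp: Gset_def Delta_def intro: finite_subset)
  qed
  moreover have "exp (- 32 * real d) * (32 * real d * P / R) / (1 + 96 * real d)
      \<le> exp (- \<mu> * sqdist d c x) - exp (- \<mu> * (R + P / 2)\<^sup>2)"
    unfolding \<mu>_def using gaussian_gap_ge[OF d _ _ P(3) sqdist_nonneg sx] R P by simp
  ultimately show ?thesis using n by linarith
qed

theorem mainTheorem12:
  fixes d :: nat and \<gamma> chi :: real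
  assumes "d \<ge> 3"
    and "1 / (real d - 1) < \<gamma>" and "\<gamma> < 1"
    and "0 < chi" and "chi < 1 / 4"
  shows "\<exists>c1 > 0. \<exists>N0. \<forall>N \<ge> N0. \<forall>x \<in> tbdry N d (Bset d \<gamma> chi N).
           hit_before_prob N d x (Gset d \<gamma> chi N) (Delta d \<gamma> chi N) \<ge> c1 * real N powr (\<gamma> - 1)"
proof -
  have d: "d > 0" and chi: "0 < chi" using assms by auto
  have "0 < 1 / (real d - 1)" using assms(1) by simp
  then have \<gamma>: "0 < \<gamma>" "\<gamma> < 1" using assms(2,3) by linarith+
  have "eventually (\<lambda>N. 2 \<le> real N powr \<gamma> \<and> 4 * real d \<le> (real N powr \<gamma>)\<^sup>2
      \<and> real N powr \<gamma> \<le> 2 * (chi * real N) \<and> 4 \<le> chi * real N \<and> 128 * real d \<le> (chi * real N)\<^sup>2) sequentially"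
    using \<gamma> chi by (intro eventually_conj; real_asymp)
  then obtain N0 where N0: "\<And>N. N \<ge> N0 \<Longrightarrow> 2 \<le> real N powr \<gamma> \<and> 4 * real d \<le> (real N powr \<gamma>)\<^sup>2
      \<and> real N powr \<gamma> \<le> 2 * (chi * real N) \<and> 4 \<le> chi * real N \<and> 128 * real d \<le> (chi * real N)\<^sup>2"
    unfolding eventually_sequentially by blast
  define c1 where "c1 = exp (- 32 * real d) * (32 * real d / chi) / (1 + 96 * real d)"
  have "c1 * real N powr (\<gamma> - 1) \<le> hit_before_prob N d x (Gset d \<gamma> chi N) (Delta d \<gamma> chi N)"
    if N: "N \<ge> N0" and x: "x \<in> tbdry N d (Bset d \<gamma> chi N)" for N x
  proof -
    have "N > 0" using N0[OF N] chi by (cases N) auto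
    then have "c1 * real N powr (\<gamma> - 1) =
        exp (- 32 * real d) * (32 * real d * real N powr \<gamma> / (chi * real N)) / (1 + 96 * real d)"
      unfolding c1_def by (simp add: powr_diff field_simps)
    with hit_before_prob_ge[OF d _ _ _ _ _ x] N0[OF N] show ?thesis by simp
  qed
  moreover have "c1 > 0" unfolding c1_def using d chi by simp
  ultimately show ?thesis by (intro exI[of _ c1] exI[of _ N0]) auto
qed
end
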